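(* Let $R$ be a ring and $M$ a projective left $R$-module which is 2-primal. Then $\mathcal N_s(M)=\langle E_M(0)\rangle=\beta_{co}(M)=\beta(M)$. In particular the zero submodule of $M$ satisfies both the complete radical formula and the radical formula.
   Context: Rings are associative with identity; modules are unital left modules. A submodule $P$ of $M$ is prime if $RM\not\subseteq P$ and for every ideal $A$ of $R$ and submodule $K$ with $AK\subseteq P$, $K\subseteq P$ or $AM\subseteq P$; completely prime if $RM\not\subseteq P$ and $rm\in P$ implies $m\in P$ or $rM\subseteq P$. $\beta(M)$ (resp. $\beta_{co}(M)$) is the intersection of all prime (resp. completely prime) submodules ($=M$ if none). $M$ is 2-primal if $\beta(M)=\beta_{co}(M)$. $E_M(0)=\{rm: r\in R,m\in M, r^km=0\text{ for some }k\in\mathbb N\}$, $\langle E_M(0)\rangle$ the submodule generated. A submodule $N$ satisfies the radical formula (resp. complete radical formula) if $\langle E_M(N)\rangle$ equals the intersection of all prime (resp. completely prime) submodules containing $N$. $\mathcal N_s(M)$ is the set of strongly nilpotent elements: $m=\sum_{i=1}^r a_im_i$ ($a_i\in R,m_i\in M$) such that for each $i$ and every sequence $a_{i1}=a_i$, $a_{i,n+1}\in a_{in}Ra_{in}$, there is $k$ with $a_{ik}Rm_i=0$. *)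

theory Defs
  imports Main
begin

text \<open>A left module is the whole type 'm (an abelian group) with a scalar
action s :: 'r => 'm => 'm satisfying the unital left module axioms.\<close>

definition lmodule :: "('r::{ring,monoid_mult} \<Rightarrow> 'm::ab_group_add \<Rightarrow> 'm) \<Rightarrow> bool" where
  "lmodule s \<longleftrightarrow>
     (\<forall>a x y. s a (x + y) = s a x + s a y) \<and>
     (\<forall>a b x. s (a + b) x = s a x + s b x) \<and>
     (\<forall>a b x. s (a * b) x = s a (s b x)) \<and>
     (\<forall>x. s 1 x = x)"

definition submod :: "('r::{ring,monoid_mult} \<Rightarrow> 'm::ab_group_add \<Rightarrow> 'm) \<Rightarrow> 'm set \<Rightarrow> bool" where
  "submod s N \<longleftrightarrow> 0 \<in> N \<and> (\<forall>x\<in>N. \<forall>y\<in>N. x + y \<in> N) \<and> (\<forall>x\<in>N. - x \<in> N)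
     \<and> (\<forall>a. \<forall>x\<in>N. s a x \<in> N)"

definition gen_submod :: "('r::{ring,monoid_mult} \<Rightarrow> 'm::ab_group_add \<Rightarrow> 'm) \<Rightarrow> 'm set \<Rightarrow> 'm set" where
  "gen_submod s S = \<Inter> {N. submod s N \<and> S \<subseteq> N}"

definition ring_ideal :: "'r::{ring,monoid_mult} set \<Rightarrow> bool" where
  "ring_ideal A \<longleftrightarrow> 0 \<in> A \<and> (\<forall>x\<in>A. \<forall>y\<in>A. x + y \<in> A) \<and> (\<forall>x\<in>A. - x \<in> A)
     \<and> (\<forall>r. \<forall>x\<in>A. r * x \<in> A \<and> x * r \<in> A)"

definition prod_sm :: "('r::{ring,monoid_mult} \<Rightarrow> 'm::ab_group_add \<Rightarrow> 'm) \<Rightarrow> 'r set \<Rightarrow> 'm set \<Rightarrow> 'm set" where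
  "prod_sm s A K = gen_submod s {s a k | a k. a \<in> A \<and> k \<in> K}"

definition prime_submod :: "('r::{ring,monoid_mult} \<Rightarrow> 'm::ab_group_add \<Rightarrow> 'm) \<Rightarrow> 'm set \<Rightarrow> bool" where
  "prime_submod s P \<longleftrightarrow> submod s P \<and> \<not> prod_sm s UNIV UNIV \<subseteq> P \<and>
     (\<forall>A K. ring_ideal A \<and> submod s K \<and> prod_sm s A K \<subseteq> P \<longrightarrow>
        K \<subseteq> P \<or> prod_sm s A UNIV \<subseteq> P)"

definition cprime_submod :: "('r::{ring,monoid_mult} \<Rightarrow> 'm::ab_group_add \<Rightarrow> 'm) \<Rightarrow> 'm set \<Rightarrow> bool" where
  "cprime_submod s P \<longleftrightarrow> submod s P \<and> \<not> prod_sm s UNIV UNIV \<subseteq> P \<and>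
     (\<forall>r m. s r m \<in> P \<longrightarrow> m \<in> P \<or> (\<forall>x. s r x \<in> P))"

text \<open>Intersections (the intersection of the empty family is UNIV = M).\<close>
definition beta :: "('r::{ring,monoid_mult} \<Rightarrow> 'm::ab_group_add \<Rightarrow> 'm) \<Rightarrow> 'm set" where
  "beta s = \<Inter> {P. prime_submod s P}"

definition beta_co :: "('r::{ring,monoid_mult} \<Rightarrow> 'm::ab_group_add \<Rightarrow> 'm) \<Rightarrow> 'm set" where
  "beta_co s = \<Inter> {P. cprime_submod s P}"

definition two_primal :: "('r::{ring,monoid_mult} \<Rightarrow> 'm::ab_group_add \<Rightarrow> 'm) \<Rightarrow> bool" where
  "two_primal s \<longleftrightarrow> beta s = beta_co s"

definition E0 :: "('r::{ring,monoid_mult} \<Rightarrow> 'm::ab_group_add \<Rightarrow> 'm) \<Rightarrow> 'm set" where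
  "E0 s = {s r m | r m. \<exists>k::nat. s (r ^ k) m = 0}"

definition sn_pair :: "('r::{ring,monoid_mult} \<Rightarrow> 'm::ab_group_add \<Rightarrow> 'm) \<Rightarrow> 'r \<Rightarrow> 'm \<Rightarrow> bool" where
  "sn_pair s a m \<longleftrightarrow>
     (\<forall>f :: nat \<Rightarrow> 'r. f 0 = a \<and> (\<forall>n. \<exists>r. f (Suc n) = f n * r * f n) \<longrightarrow>
        (\<exists>k. \<forall>r. s (f k * r) m = 0))"

definition Ns :: "('r::{ring,monoid_mult} \<Rightarrow> 'm::ab_group_add \<Rightarrow> 'm) \<Rightarrow> 'm set" where
  "Ns s = {x. \<exists>ps :: ('r \<times> 'm) list. x = sum_list (map (\<lambda>(a, m). s a m) ps) \<and>
                 (\<forall>(a, m) \<in> set ps. sn_pair s a m)}"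

text \<open>The free module R^(M) on the underlying set of M is modelled by the
finitely supported functions 'm => 'r with pointwise addition and left multiplication;
pi is the canonical epimorphism R^(M) -> M.  M is projective iff pi splits, i.e. there is a
module homomorphism sigma : M -> R^(M) with pi o sigma = id (M is a direct summand of
a free module).\<close>
definition fin_supp :: "('m \<Rightarrow> 'r::zero) \<Rightarrow> bool" where
  "fin_supp f \<longleftrightarrow> finite {x. f x \<noteq> 0}"

definition free_proj :: "('r::{ring,monoid_mult} \<Rightarrow> 'm::ab_group_add \<Rightarrow> 'm) \<Rightarrow> ('m \<Rightarrow> 'r) \<Rightarrow> 'm" where
  "free_proj s f = (\<Sum>x\<in>{x. f x \<noteq> 0}. s (f x) x)"

definition projective :: "('r::{ring,monoid_mult} \<Rightarrow> 'm::ab_group_add \<Rightarrow> 'm) \<Rightarrow> bool" where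
  "projective s \<longleftrightarrow> (\<exists>\<sigma> :: 'm \<Rightarrow> ('m \<Rightarrow> 'r).
     (\<forall>x. fin_supp (\<sigma> x)) \<and>
     (\<forall>x y. \<sigma> (x + y) = (\<lambda>z. \<sigma> x z + \<sigma> y z)) \<and>
     (\<forall>r x. \<sigma> (s r x) = (\<lambda>z. r * \<sigma> x z)) \<and>
     (\<forall>x. free_proj s (\<sigma> x) = x))"

end

(* Strongly nilpotent elements lie in <E_M(0)> (test the m-sequence a, a^2, a^4, ...), and
   <E_M(0)> lies in every completely prime submodule, so N_s(M) <= <E_M(0)> <= beta_co(M) = beta(M).
   For beta(M) <= N_s(M), split M off the free module R^(M) by sigma, so that x = sum_z sigma_z(x) z.
   If an m-sequence starting at a coordinate sigma_z(x) never reaches 0, some prime ideal p avoids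
   it, and the submodule of all m whose coordinates lie in p is prime and misses x.  Hence for
   x in beta(M) every pair (sigma_z(x), z) is strongly nilpotent. *)

theory Submission
  imports Defs
begin

lemma lmodule_scale_zero:
  assumes "lmodule s" shows "s 0 x = 0"
proof -
  have "s (0 + 0) x = s 0 x + s 0 x" using assms unfolding lmodule_def by blast
  then show ?thesis by simp
qed

lemma submod_gen_submod: "submod s (gen_submod s S)"
  unfolding gen_submod_def submod_def by blast

lemma gen_submod_superset: "S \<subseteq> gen_submod s S"
  unfolding gen_submod_def by blast

lemma gen_submod_least: "submod s N \<Longrightarrow> S \<subseteq> N \<Longrightarrow> gen_submod s S \<subseteq> N"
  unfolding gen_submod_def by blast

lemma submod_sum_list: "submod s N \<Longrightarrow> set xs \<subseteq> N \<Longrightarrow> sum_list xs \<in> N"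
  by (induction xs) (auto simp: submod_def)

lemma prod_sm_memI: "a \<in> A \<Longrightarrow> k \<in> K \<Longrightarrow> s a k \<in> prod_sm s A K"
  unfolding prod_sm_def by (rule subsetD[OF gen_submod_superset]) blast

lemma prod_sm_UNIV_UNIV_contains:
  assumes "lmodule s" shows "x \<in> prod_sm s UNIV UNIV"
proof -
  have "s 1 x = x" using assms unfolding lmodule_def by blast
  then show ?thesis using prod_sm_memI[of 1 UNIV x UNIV s] by simp
qed

definition m_system :: "'r::{ring,monoid_mult} set \<Rightarrow> bool" where
  "m_system S \<longleftrightarrow> (\<forall>a\<in>S. \<forall>b\<in>S. \<exists>r. a * r * b \<in> S)"

(* Properness is not part of the definition: it comes from disjointness from a nonempty set. *)
definition prime_ideal :: "'r::{ring,monoid_mult} set \<Rightarrow> bool" where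
  "prime_ideal P \<longleftrightarrow> ring_ideal P \<and> (\<forall>a b. (\<forall>r. a * r * b \<in> P) \<longrightarrow> a \<in> P \<or> b \<in> P)"

lemma ring_idealI:
  assumes "0 \<in> A" "\<And>x y. x \<in> A \<Longrightarrow> y \<in> A \<Longrightarrow> x + y \<in> A" "\<And>x. x \<in> A \<Longrightarrow> - x \<in> A"
    "\<And>r x. x \<in> A \<Longrightarrow> r * x \<in> A" "\<And>r x. x \<in> A \<Longrightarrow> x * r \<in> A"
  shows "ring_ideal A"
  unfolding ring_ideal_def using assms by simp

lemma ring_ideal_Union_chain:
  assumes "C \<noteq> {}" "chain\<^sub>\<subseteq> C" "\<And>I. I \<in> C \<Longrightarrow> ring_ideal I"
  shows "ring_ideal (\<Union>C)"
proof (rule ring_idealI)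
  fix x y assume "x \<in> \<Union>C" "y \<in> \<Union>C"
  then obtain I J where "x \<in> I" "y \<in> J" "I \<in> C" "J \<in> C" by blast
  with assms(2) obtain K where "x \<in> K" "y \<in> K" "K \<in> C"
    unfolding chain_subset_def by blast
  then show "x + y \<in> \<Union>C" using assms(3) unfolding ring_ideal_def by blast
qed (use assms(1,3) in \<open>unfold ring_ideal_def, blast+\<close>)

lemma ring_ideal_left_colon:
  assumes P: "ring_ideal P" shows "ring_ideal {t. \<forall>r. t * r * b \<in> P}"
proof (rule ring_idealI)
  show "x * c \<in> {t. \<forall>r. t * r * b \<in> P}" if "x \<in> {t. \<forall>r. t * r * b \<in> P}" for c x
  proof -
    have "\<forall>r. x * (c * r) * b \<in> P" using that by blast
    then show ?thesis by (simp add: mult.assoc)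
  qed
  show "c * x \<in> {t. \<forall>r. t * r * b \<in> P}" if "x \<in> {t. \<forall>r. t * r * b \<in> P}" for c x
    using that P unfolding ring_ideal_def by (simp add: mult.assoc)
qed (use P in \<open>simp_all add: ring_ideal_def distrib_right\<close>)

lemma ring_ideal_right_colon:
  assumes P: "ring_ideal P" shows "ring_ideal {t. \<forall>r. a * r * t \<in> P}"
proof (rule ring_idealI)
  show "c * x \<in> {t. \<forall>r. a * r * t \<in> P}" if "x \<in> {t. \<forall>r. a * r * t \<in> P}" for c x
  proof -
    have "\<forall>r. a * (r * c) * x \<in> P" using that by blast
    then show ?thesis by (simp flip: mult.assoc)
  qed
  show "x * c \<in> {t. \<forall>r. a * r * t \<in> P}" if "x \<in> {t. \<forall>r. a * r * t \<in> P}" for c x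
    using that P unfolding ring_ideal_def by (simp flip: mult.assoc)
qed (use P in \<open>simp_all add: ring_ideal_def distrib_left\<close>)

lemma prime_ideal_if_maximal_disjoint:
  assumes S: "m_system S" and P: "ring_ideal P" "P \<inter> S = {}"
    and max: "\<And>I. ring_ideal I \<Longrightarrow> I \<inter> S = {} \<Longrightarrow> P \<subseteq> I \<Longrightarrow> I = P"
  shows "prime_ideal P"
  unfolding prime_ideal_def
proof (intro conjI allI impI P(1))
  fix a b assume ab: "\<forall>r. a * r * b \<in> P"
  have enlarge: "I \<inter> S \<noteq> {}" if "ring_ideal I" "P \<subseteq> I" "x \<in> I" "x \<notin> P" for I x
    using max that by blast
  show "a \<in> P \<or> b \<in> P"
  proof (rule ccontr)
    assume "\<not> (a \<in> P \<or> b \<in> P)"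
    then have "a \<notin> P" "b \<notin> P" by auto
    have "P \<subseteq> {t. \<forall>r. t * r * b \<in> P}"
      using P(1) unfolding ring_ideal_def by (auto simp flip: mult.assoc)
    then obtain x where x: "x \<in> S" "\<forall>r. x * r * b \<in> P"
      using enlarge[OF ring_ideal_left_colon[OF P(1)]] ab \<open>a \<notin> P\<close> by blast
    have "P \<subseteq> {t. \<forall>r. x * r * t \<in> P}"
      using P(1) unfolding ring_ideal_def by blast
    then obtain y where y: "y \<in> S" "\<forall>r. x * r * y \<in> P"
      using enlarge[OF ring_ideal_right_colon[OF P(1)]] x(2) \<open>b \<notin> P\<close> by blast
    obtain r where "x * r * y \<in> S" using S x(1) y(1) unfolding m_system_def by blast
    then show False using y(2) P(2) by blast
  qed
qed

lemma exists_prime_ideal_disjoint: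
  assumes S: "m_system S" and "0 \<notin> S"
  shows "\<exists>P. prime_ideal P \<and> P \<inter> S = {}"
proof -
  define F where "F = {I. ring_ideal I \<and> I \<inter> S = {}}"
  have "ring_ideal {0}" by (rule ring_idealI) auto
  then have "F \<noteq> {}" using assms(2) unfolding F_def by blast
  moreover have "\<Union>C \<in> F" if "C \<noteq> {}" "subset.chain F C" for C
  proof -
    have "C \<subseteq> F" "chain\<^sub>\<subseteq> C" using that(2) unfolding subset_chain_def chain_subset_def by auto
    then have "ring_ideal (\<Union>C)" using ring_ideal_Union_chain[OF that(1)] unfolding F_def by blast
    moreover have "\<Union>C \<inter> S = {}" using \<open>C \<subseteq> F\<close> unfolding F_def by blast
    ultimately show ?thesis unfolding F_def by blast
  qed
  ultimately obtain P where "P \<in> F" and max: "\<forall>I\<in>F. P \<subseteq> I \<longrightarrow> I = P"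
    using subset_Zorn_nonempty[of F] by blast
  then have "ring_ideal P" "P \<inter> S = {}" unfolding F_def by auto
  moreover have "I = P" if "ring_ideal I" "I \<inter> S = {}" "P \<subseteq> I" for I
    using max that unfolding F_def by blast
  ultimately show ?thesis using prime_ideal_if_maximal_disjoint[OF S] by blast
qed

lemma m_sequence_multiple:
  fixes f :: "nat \<Rightarrow> 'r::{ring,monoid_mult}"
  assumes f: "\<forall>n. \<exists>r. f (Suc n) = f n * r * f n" and "i \<le> n"
  shows "\<exists>a b. f n = f i * a \<and> f n = b * f i"
  using \<open>i \<le> n\<close>
proof (induction n rule: dec_induct)
  case base
  show ?case by (metis mult_1_right mult_1_left)
next
  case (step n)
  then obtain a b where "f n = f i * a" "f n = b * f i" by blast
  moreover obtain r where "f (Suc n) = f n * r * f n" using f by blast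
  ultimately have "f (Suc n) = f i * (a * r * f n) \<and> f (Suc n) = (f n * r * b) * f i"
    by (metis mult.assoc)
  then show ?case by blast
qed

lemma m_system_range:
  fixes f :: "nat \<Rightarrow> 'r::{ring,monoid_mult}"
  assumes f: "\<forall>n. \<exists>r. f (Suc n) = f n * r * f n"
  shows "m_system (range f)"
  unfolding m_system_def
proof (intro ballI)
  fix x y assume "x \<in> range f" "y \<in> range f"
  then obtain i j where ij: "x = f i" "y = f j" by blast
  define n where "n = max i j"
  obtain a where a: "f n = f i * a" using m_sequence_multiple[OF f, of i n] n_def by auto
  obtain b where b: "f n = b * f j" using m_sequence_multiple[OF f, of j n] n_def by auto
  obtain r where "f (Suc n) = f n * r * f n" using f by blast
  then have "f (Suc n) = x * (a * r * b) * y" using a b ij by (metis mult.assoc)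
  then show "\<exists>r. x * r * y \<in> range f" by (metis rangeI)
qed

lemma sn_pair_scale_in_E0:
  assumes "sn_pair s a m" shows "s a m \<in> E0 s"
proof -
  define f where "f n = a ^ (2 ^ n)" for n :: nat
  have "f (Suc n) = f n * 1 * f n" for n
    by (simp add: f_def power_add[symmetric] mult_2)
  then obtain k where "\<forall>r. s (f k * r) m = 0"
    using assms unfolding sn_pair_def by (metis f_def power_0 power_one_right)
  then have "s (a ^ (2 ^ k)) m = 0" unfolding f_def by (metis mult_1_right)
  then show ?thesis unfolding E0_def by blast
qed

lemma Ns_subset_gen_submod_E0: "Ns s \<subseteq> gen_submod s (E0 s)"
proof
  fix x assume "x \<in> Ns s"
  then obtain ps where x: "x = sum_list (map (\<lambda>(a, m). s a m) ps)"
    and ps: "\<forall>(a, m) \<in> set ps. sn_pair s a m" unfolding Ns_def by blast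
  have "set (map (\<lambda>(a, m). s a m) ps) \<subseteq> gen_submod s (E0 s)"
    using ps sn_pair_scale_in_E0 gen_submod_superset by fastforce
  then show "x \<in> gen_submod s (E0 s)"
    unfolding x by (rule submod_sum_list[OF submod_gen_submod])
qed

lemma cprime_submod_E0_subset:
  assumes s: "lmodule s" and P: "cprime_submod s P"
  shows "E0 s \<subseteq> P"
proof
  have sub: "submod s P" using P unfolding cprime_submod_def by blast
  have root: "s r m \<in> P" if "s (r ^ k) m \<in> P" for r m and k :: nat
    using that
  proof (induction k arbitrary: m)
    case 0
    then show ?case using s sub unfolding lmodule_def submod_def by simp
  next
    case (Suc k)
    then have "s r (s (r ^ k) m) \<in> P" using s unfolding lmodule_def by (simp add: power_Suc)
    then show ?case using P Suc.IH unfolding cprime_submod_def by blast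
  qed
  fix y assume "y \<in> E0 s"
  then obtain r m k where "y = s r m" "s (r ^ k) m = 0" unfolding E0_def by blast
  then show "y \<in> P" using root sub unfolding submod_def by metis
qed

lemma gen_submod_E0_subset_beta_co:
  assumes "lmodule s" shows "gen_submod s (E0 s) \<subseteq> beta_co s"
proof -
  have "gen_submod s (E0 s) \<subseteq> P" if P: "cprime_submod s P" for P
  proof (rule gen_submod_least)
    show "submod s P" using P unfolding cprime_submod_def by blast
    show "E0 s \<subseteq> P" using assms P by (rule cprime_submod_E0_subset)
  qed
  then show ?thesis unfolding beta_co_def by blast
qed

lemma sum_in_Ns:
  assumes "finite A" "\<forall>z\<in>A. sn_pair s (g z) z"
  shows "(\<Sum>z\<in>A. s (g z) z) \<in> Ns s"
proof -
  obtain xs where xs: "set xs = A" "distinct xs" using finite_distinct_list[OF assms(1)] by blast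
  define ps where "ps = map (\<lambda>z. (g z, z)) xs"
  have "(\<Sum>z\<in>A. s (g z) z) = sum_list (map (\<lambda>(a, m). s a m) ps)"
    unfolding ps_def using xs by (simp add: sum_list_distinct_conv_sum_set comp_def)
  moreover have "\<forall>(a, m) \<in> set ps. sn_pair s a m" using assms(2) xs ps_def by auto
  ultimately show ?thesis unfolding Ns_def by blast
qed

locale module_coordinates =
  fixes s :: "'r::{ring,monoid_mult} \<Rightarrow> 'm::ab_group_add \<Rightarrow> 'm" and \<sigma> :: "'m \<Rightarrow> 'm \<Rightarrow> 'r"
  assumes lmodule: "lmodule s"
    and additive: "\<sigma> (x + y) = (\<lambda>z. \<sigma> x z + \<sigma> y z)"
    and scale: "\<sigma> (s r x) = (\<lambda>z. r * \<sigma> x z)"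
begin

lemma coordinate_zero: "\<sigma> 0 z = 0"
  using additive[of 0 0] by (metis add.right_neutral add_left_cancel)

lemma coordinate_minus: "\<sigma> (- x) z = - \<sigma> x z"
  using additive[of x "- x"] coordinate_zero by (metis add.right_inverse add_eq_0_iff)

lemma prime_submod_coordinate_preimage:
  assumes p: "prime_ideal p" and x: "x \<notin> {m. \<forall>z. \<sigma> m z \<in> p}"
  shows "prime_submod s {m. \<forall>z. \<sigma> m z \<in> p}" (is "prime_submod s ?Q")
  unfolding prime_submod_def
proof (intro conjI allI impI)
  have p_ideal: "ring_ideal p" using p unfolding prime_ideal_def by blast
  then show Q: "submod s ?Q"
    unfolding submod_def ring_ideal_def by (simp add: additive scale coordinate_zero coordinate_minus)
  show "\<not> prod_sm s UNIV UNIV \<subseteq> ?Q" using x prod_sm_UNIV_UNIV_contains[OF lmodule] by blast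
  fix A K assume AK: "ring_ideal A \<and> submod s K \<and> prod_sm s A K \<subseteq> ?Q"
  show "K \<subseteq> ?Q \<or> prod_sm s A UNIV \<subseteq> ?Q"
  proof (cases "K \<subseteq> ?Q")
    case False
    then obtain m w where m: "m \<in> K" "\<sigma> m w \<notin> p" by blast
    have "a \<in> p" if a: "a \<in> A" for a
    proof -
      have "a * r \<in> A" for r using a AK unfolding ring_ideal_def by blast
      then have "s (a * r) m \<in> prod_sm s A K" for r using m(1) by (rule prod_sm_memI)
      then have "\<sigma> (s (a * r) m) w \<in> p" for r using AK by blast
      then have "\<forall>r. a * r * \<sigma> m w \<in> p" by (simp add: scale)
      then show ?thesis using p m(2) unfolding prime_ideal_def by blast
    qed
    then have "{s a k | a k. a \<in> A \<and> k \<in> UNIV} \<subseteq> ?Q"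
      using p_ideal unfolding ring_ideal_def by (auto simp: scale)
    then have "prod_sm s A UNIV \<subseteq> ?Q" unfolding prod_sm_def by (rule gen_submod_least[OF Q])
    then show ?thesis ..
  qed simp
qed

lemma beta_coordinate_sn_pair:
  assumes "x \<in> beta s" shows "sn_pair s (\<sigma> x z) z"
  unfolding sn_pair_def
proof (intro allI impI)
  fix f :: "nat \<Rightarrow> 'r" assume f: "f 0 = \<sigma> x z \<and> (\<forall>n. \<exists>r. f (Suc n) = f n * r * f n)"
  have "0 \<in> range f"
  proof (rule ccontr)
    assume "0 \<notin> range f"
    moreover have "m_system (range f)" using f by (intro m_system_range) blast
    ultimately obtain p where p: "prime_ideal p" "p \<inter> range f = {}"
      using exists_prime_ideal_disjoint by blast
    have "f 0 \<notin> p" using p(2) by blast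
    then have x: "x \<notin> {m. \<forall>z. \<sigma> m z \<in> p}" using f by auto
    then have "prime_submod s {m. \<forall>z. \<sigma> m z \<in> p}"
      by (rule prime_submod_coordinate_preimage[OF p(1)])
    then show False using assms x unfolding beta_def by blast
  qed
  then obtain k where "f k = 0" by (metis rangeE)
  then have "\<forall>r. s (f k * r) z = 0" using lmodule_scale_zero[OF lmodule] by simp
  then show "\<exists>k. \<forall>r. s (f k * r) z = 0" ..
qed

end

lemma beta_subset_Ns:
  assumes s: "lmodule s" and "projective s" shows "beta s \<subseteq> Ns s"
proof
  fix x assume x: "x \<in> beta s"
  obtain \<sigma> where fin: "\<forall>x. fin_supp (\<sigma> x)"
    and additive: "\<forall>x y. \<sigma> (x + y) = (\<lambda>z. \<sigma> x z + \<sigma> y z)"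
    and scale: "\<forall>r x. \<sigma> (s r x) = (\<lambda>z. r * \<sigma> x z)"
    and proj: "\<forall>x. free_proj s (\<sigma> x) = x"
    using assms(2) unfolding projective_def by blast
  interpret module_coordinates s \<sigma>
    using s additive scale by unfold_locales blast+
  have "x = (\<Sum>z | \<sigma> x z \<noteq> 0. s (\<sigma> x z) z)" using proj unfolding free_proj_def by metis
  also have "\<dots> \<in> Ns s"
    using fin beta_coordinate_sn_pair[OF x] unfolding fin_supp_def by (blast intro: sum_in_Ns)
  finally show "x \<in> Ns s" .
qed

theorem theorem4p10:
  fixes s :: "'r::{ring,monoid_mult} \<Rightarrow> 'm::ab_group_add \<Rightarrow> 'm"
  assumes "lmodule s" and "projective s" and "two_primal s"
  shows "Ns s = gen_submod s (E0 s) \<and> gen_submod s (E0 s) = beta_co s \<and> beta_co s = beta s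
     \<and> gen_submod s (E0 s) = \<Inter> {P. cprime_submod s P \<and> {0} \<subseteq> P}
     \<and> gen_submod s (E0 s) = \<Inter> {P. prime_submod s P \<and> {0} \<subseteq> P}"
proof -
  have "Ns s \<subseteq> gen_submod s (E0 s)" by (rule Ns_subset_gen_submod_E0)
  moreover have "gen_submod s (E0 s) \<subseteq> beta_co s" by (rule gen_submod_E0_subset_beta_co[OF assms(1)])
  moreover have "beta_co s = beta s" using assms(3) unfolding two_primal_def by simp
  moreover have "beta s \<subseteq> Ns s" by (rule beta_subset_Ns[OF assms(1,2)])
  ultimately have "Ns s = gen_submod s (E0 s) \<and> gen_submod s (E0 s) = beta_co s \<and> beta_co s = beta s"
    by blast
  moreover have "{P. cprime_submod s P \<and> {0} \<subseteq> P} = {P. cprime_submod s P}"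
    and "{P. prime_submod s P \<and> {0} \<subseteq> P} = {P. prime_submod s P}"
    by (auto simp: cprime_submod_def prime_submod_def submod_def)
  ultimately show ?thesis unfolding beta_def beta_co_def by simp
qed

end
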